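(* Let $\psi\in\mathbb{R}[x]$. If the constant function $1$ is in the image of the Fischer operator $F_\psi$, then every zero $x\in\mathbb{R}^d$ of $\psi$ has multiplicity $\le 2$.
   Context: $\mathbb{R}[x]$ denotes the real polynomials in $d$ variables, $\Delta$ the Laplacian, and $F_\psi:\mathbb{R}[x]\to\mathbb{R}[x]$, $F_\psi(q)=\Delta(\psi q)$. The multiplicity of a zero $x_0$ of a polynomial $\psi$ is the largest natural number $N$ such that $\frac{\partial^\alpha}{\partial x^\alpha}\psi(x_0)=0$ for all multi-indices $\alpha\in\mathbb{N}_0^d$ with $|\alpha|\le N-1$. *)

theory Defs
  imports Complex_Main "HOL-Library.Poly_Mapping"
begin

(* Real polynomials in the variables x_0, x_1, ... represented by their
coefficients: a monomial is a finitely supported exponent vector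
(nat \<Rightarrow>\<^sub>0 nat), a polynomial a finitely supported coefficient map.
Multiplication is the convolution product provided by Poly_Mapping. *)

type_synonym mpoly = "(nat \<Rightarrow>\<^sub>0 nat) \<Rightarrow>\<^sub>0 real"

definition in_Rd :: "nat \<Rightarrow> mpoly \<Rightarrow> bool" where
  "in_Rd d p \<longleftrightarrow> (\<forall>m \<in> Poly_Mapping.keys p. Poly_Mapping.keys m \<subseteq> {..<d})"

definition meval :: "mpoly \<Rightarrow> (nat \<Rightarrow> real) \<Rightarrow> real" where
  "meval p x = (\<Sum>m\<in>Poly_Mapping.keys p. Poly_Mapping.lookup p m * (\<Prod>i\<in>Poly_Mapping.keys m. x i ^ Poly_Mapping.lookup m i))"

definition mpderiv :: "nat \<Rightarrow> mpoly \<Rightarrow> mpoly" where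
  "mpderiv i p = Abs_poly_mapping
     (\<lambda>m. real (Poly_Mapping.lookup m i + 1) * Poly_Mapping.lookup p (m + Poly_Mapping.single i 1))"

definition laplacian :: "nat \<Rightarrow> mpoly \<Rightarrow> mpoly" where
  "laplacian d p = (\<Sum>i<d. mpderiv i (mpderiv i p))"

definition fischer :: "nat \<Rightarrow> mpoly \<Rightarrow> mpoly \<Rightarrow> mpoly" where
  "fischer d \<psi> q = laplacian d (\<psi> * q)"

definition mderiv_multi :: "nat \<Rightarrow> (nat \<Rightarrow> nat) \<Rightarrow> mpoly \<Rightarrow> mpoly" where
  "mderiv_multi d \<alpha> p = foldr (\<lambda>i. mpderiv i ^^ \<alpha> i) [0..<d] p"

definition vanishes_to :: "nat \<Rightarrow> mpoly \<Rightarrow> (nat \<Rightarrow> real) \<Rightarrow> nat \<Rightarrow> bool" where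
  "vanishes_to d \<psi> x0 N \<longleftrightarrow>
     (\<forall>\<alpha>::nat \<Rightarrow> nat. (\<Sum>i<d. \<alpha> i) + 1 \<le> N \<longrightarrow> meval (mderiv_multi d \<alpha> \<psi>) x0 = 0)"

definition zero_multiplicity :: "nat \<Rightarrow> mpoly \<Rightarrow> (nat \<Rightarrow> real) \<Rightarrow> nat" where
  "zero_multiplicity d \<psi> x0 = (GREATEST N. vanishes_to d \<psi> x0 N)"

end

theory Submission
  imports Defs
begin

(* Evaluation at a point is a ring homomorphism and every partial derivative is a derivation,
   so d_i^2 (psi q) = d_i^2 psi * q + 2 d_i psi * d_i q + psi * d_i^2 q. If psi vanished to
   order 3 at x, then psi, d_i psi and d_i^2 psi would all vanish at x, hence Delta (psi q)
   would vanish at x for every q, and Delta (psi q) could not be the constant 1. *)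

lemma poly_mapping_single_add_induct [case_names zero single_add]:
  fixes p :: "'a \<Rightarrow>\<^sub>0 'b::comm_monoid_add"
  assumes "P 0" and "\<And>m c p. P p \<Longrightarrow> P (Poly_Mapping.single m c + p)"
  shows "P p"
proof (induction p rule: update_induct)
  case const
  then show ?case using assms(1) .
next
  case (update f a b)
  then have "Poly_Mapping.update a b f = Poly_Mapping.single a b + f"
    by (intro poly_mapping_eqI) (auto simp: lookup_update lookup_add lookup_single in_keys_iff when_def)
  with update show ?case using assms(2) by metis
qed

definition mon :: "(nat \<Rightarrow>\<^sub>0 nat) \<Rightarrow> (nat \<Rightarrow> real) \<Rightarrow> real" where
  "mon m x = (\<Prod>i\<in>Poly_Mapping.keys m. x i ^ Poly_Mapping.lookup m i)"

lemma mon_superset: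
  assumes "finite S" "Poly_Mapping.keys m \<subseteq> S"
  shows "mon m x = (\<Prod>i\<in>S. x i ^ Poly_Mapping.lookup m i)"
  unfolding mon_def
  by (rule prod.mono_neutral_left) (use assms in \<open>auto simp: in_keys_iff\<close>)

lemma mon_add: "mon (m + n) x = mon m x * mon n x"
proof -
  let ?S = "Poly_Mapping.keys m \<union> Poly_Mapping.keys n"
  have "mon (m + n) x = (\<Prod>i\<in>?S. x i ^ Poly_Mapping.lookup (m + n) i)"
    using keys_add[of m n] by (intro mon_superset) auto
  also have "\<dots> = (\<Prod>i\<in>?S. x i ^ Poly_Mapping.lookup m i) * (\<Prod>i\<in>?S. x i ^ Poly_Mapping.lookup n i)"
    by (simp add: lookup_add power_add prod.distrib)
  also have "\<dots> = mon m x * mon n x"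
    by (simp add: mon_superset[symmetric])
  finally show ?thesis .
qed

lemma meval_superset:
  assumes "finite S" "Poly_Mapping.keys p \<subseteq> S"
  shows "meval p x = (\<Sum>m\<in>S. Poly_Mapping.lookup p m * mon m x)"
  unfolding meval_def mon_def[symmetric]
  by (rule sum.mono_neutral_left) (use assms in \<open>auto simp: in_keys_iff\<close>)

lemma meval_zero: "meval 0 x = 0"
  by (simp add: meval_def)

lemma meval_add: "meval (p + q) x = meval p x + meval q x"
proof -
  let ?S = "Poly_Mapping.keys p \<union> Poly_Mapping.keys q"
  have "meval (p + q) x = (\<Sum>m\<in>?S. Poly_Mapping.lookup (p + q) m * mon m x)"
    using keys_add[of p q] by (intro meval_superset) auto
  also have "\<dots> = (\<Sum>m\<in>?S. Poly_Mapping.lookup p m * mon m x) + (\<Sum>m\<in>?S. Poly_Mapping.lookup q m * mon m x)"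
    by (simp add: lookup_add distrib_right sum.distrib)
  also have "\<dots> = meval p x + meval q x"
    by (simp add: meval_superset[symmetric])
  finally show ?thesis .
qed

lemma meval_sum: "meval (\<Sum>i\<in>A. f i) x = (\<Sum>i\<in>A. meval (f i) x)"
  by (induction A rule: infinite_finite_induct) (auto simp: meval_zero meval_add)

lemma meval_single: "meval (Poly_Mapping.single m c) x = c * mon m x"
  by (subst meval_superset[of "{m}"]) auto

lemma meval_one: "meval 1 x = 1"
  using meval_single[of 0 1 x] by (simp add: mon_def)

lemma meval_mult: "meval (p * q) x = meval p x * meval q x"
proof (induction p rule: poly_mapping_single_add_induct)
  case zero
  then show ?case by (simp add: meval_zero)
next
  case (single_add m c p)
  have "meval (Poly_Mapping.single m c * q) x = c * mon m x * meval q x"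
    by (induction q rule: poly_mapping_single_add_induct)
      (simp_all add: meval_zero distrib_left meval_add mult_single meval_single mon_add algebra_simps)
  with single_add show ?case
    by (simp add: distrib_right meval_add meval_single)
qed

lemma lookup_mpderiv:
  "Poly_Mapping.lookup (mpderiv i p) m = real (Poly_Mapping.lookup m i + 1) * Poly_Mapping.lookup p (m + Poly_Mapping.single i 1)"
proof -
  have "finite ((\<lambda>m. m + Poly_Mapping.single i 1) -` Poly_Mapping.keys p)"
    by (rule finite_vimageI) (auto simp: inj_on_def)
  then have "finite {m. real (Poly_Mapping.lookup m i + 1) * Poly_Mapping.lookup p (m + Poly_Mapping.single i 1) \<noteq> 0}"
    by (rule rev_finite_subset) (auto simp: in_keys_iff)
  then show ?thesis unfolding mpderiv_def by simp
qed

lemma minus_single_add_single: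
  fixes m :: "'a \<Rightarrow>\<^sub>0 nat"
  assumes "Poly_Mapping.lookup m i \<noteq> 0"
  shows "m - Poly_Mapping.single i 1 + Poly_Mapping.single i 1 = m"
  using assms by (intro poly_mapping_eqI) (auto simp: lookup_add lookup_minus lookup_single when_def)

lemma add_minus_single_commute:
  fixes m n :: "'a \<Rightarrow>\<^sub>0 nat"
  assumes "Poly_Mapping.lookup m i \<noteq> 0"
  shows "m - Poly_Mapping.single i 1 + n = m + n - Poly_Mapping.single i 1"
  using assms by (intro poly_mapping_eqI) (auto simp: lookup_add lookup_minus lookup_single when_def)

(* If m has no x_i, the coefficient vanishes, so the truncated m - e_i does no harm. *)
lemma mpderiv_single:
  "mpderiv i (Poly_Mapping.single m a) =
     Poly_Mapping.single (m - Poly_Mapping.single i 1) (real (Poly_Mapping.lookup m i) * a)"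
proof (rule poly_mapping_eqI)
  fix k
  let ?e = "Poly_Mapping.single i (1::nat)"
  show "Poly_Mapping.lookup (mpderiv i (Poly_Mapping.single m a)) k =
        Poly_Mapping.lookup (Poly_Mapping.single (m - ?e) (real (Poly_Mapping.lookup m i) * a)) k"
  proof (cases "Poly_Mapping.lookup m i = 0")
    case True
    then have "m \<noteq> k + ?e" by (auto simp: lookup_add)
    with True show ?thesis by (simp add: lookup_mpderiv lookup_single when_def)
  next
    case False
    then have "m = k + ?e \<longleftrightarrow> m - ?e = k"
      using minus_single_add_single[OF False] by (metis add_diff_cancel_right')
    moreover have "m = k + ?e \<Longrightarrow> real (Poly_Mapping.lookup k i + 1) = real (Poly_Mapping.lookup m i)"
      by (simp add: lookup_add)
    ultimately show ?thesis
      by (auto simp: lookup_mpderiv lookup_single when_def)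
  qed
qed

lemma mpderiv_mult_single:
  "mpderiv i (Poly_Mapping.single m a * Poly_Mapping.single n b) =
   mpderiv i (Poly_Mapping.single m a) * Poly_Mapping.single n b + Poly_Mapping.single m a * mpderiv i (Poly_Mapping.single n b)"
proof -
  let ?e = "Poly_Mapping.single i (1::nat)"
  let ?cm = "real (Poly_Mapping.lookup m i) * a * b" and ?cn = "real (Poly_Mapping.lookup n i) * a * b"
  have m: "Poly_Mapping.single (m + n - ?e) ?cm = Poly_Mapping.single (m - ?e + n) ?cm"
    using add_minus_single_commute[of m i n] by (cases "Poly_Mapping.lookup m i = 0") simp_all
  have n: "Poly_Mapping.single (m + n - ?e) ?cn = Poly_Mapping.single (m + (n - ?e)) ?cn"
    using add_minus_single_commute[of n i m] by (cases "Poly_Mapping.lookup n i = 0") (simp_all add: add.commute)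
  have "mpderiv i (Poly_Mapping.single m a * Poly_Mapping.single n b) =
        Poly_Mapping.single (m + n - ?e) (?cm + ?cn)"
    by (simp add: mult_single mpderiv_single lookup_add algebra_simps)
  also have "\<dots> = Poly_Mapping.single (m - ?e + n) ?cm + Poly_Mapping.single (m + (n - ?e)) ?cn"
    by (simp only: single_add m n)
  finally show ?thesis
    by (simp add: mult_single mpderiv_single mult_ac add.commute[of n])
qed

lemma mpderiv_add: "mpderiv i (p + q) = mpderiv i p + mpderiv i q"
  by (rule poly_mapping_eqI) (simp add: lookup_mpderiv lookup_add algebra_simps)

lemma mpderiv_zero: "mpderiv i 0 = 0"
  by (rule poly_mapping_eqI) (simp add: lookup_mpderiv)

lemma mpderiv_mult: "mpderiv i (p * q) = mpderiv i p * q + p * mpderiv i q"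
proof (induction p rule: poly_mapping_single_add_induct)
  case zero
  then show ?case by (simp add: mpderiv_zero)
next
  case (single_add m c p)
  have "mpderiv i (Poly_Mapping.single m c * q) =
        mpderiv i (Poly_Mapping.single m c) * q + Poly_Mapping.single m c * mpderiv i q"
    by (induction q rule: poly_mapping_single_add_induct)
      (simp_all add: mpderiv_zero distrib_left mpderiv_add mpderiv_mult_single)
  with single_add show ?case
    by (simp add: distrib_right mpderiv_add algebra_simps)
qed

lemma meval_laplacian_mult_eq_0:
  assumes "meval p x = 0"
    and "\<And>i. i < d \<Longrightarrow> meval (mpderiv i p) x = 0"
    and "\<And>i. i < d \<Longrightarrow> meval (mpderiv i (mpderiv i p)) x = 0"
  shows "meval (laplacian d (p * q)) x = 0"
proof -
  have "meval (mpderiv i (mpderiv i (p * q))) x = 0" if "i < d" for i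
  proof -
    have "mpderiv i (mpderiv i (p * q)) =
          (mpderiv i (mpderiv i p) * q + mpderiv i p * mpderiv i q)
          + (mpderiv i p * mpderiv i q + p * mpderiv i (mpderiv i q))"
      by (simp only: mpderiv_mult mpderiv_add)
    then show ?thesis
      using assms that by (simp only: meval_add meval_mult)
  qed
  then show ?thesis
    by (simp add: laplacian_def meval_sum)
qed

lemma mderiv_multi_single_index:
  assumes "i < d"
  shows "mderiv_multi d (\<lambda>j. if j = i then k else 0) p = (mpderiv i ^^ k) p"
proof -
  have "foldr (\<lambda>j. f j ^^ (if j = i then k else 0)) xs p = (if i \<in> set xs then (f i ^^ k) p else p)"
    if "distinct xs" for f :: "nat \<Rightarrow> mpoly \<Rightarrow> mpoly" and xs
    using that by (induction xs) auto
  with assms show ?thesis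
    by (simp add: mderiv_multi_def)
qed

lemma vanishes_to_mpderiv_funpow:
  assumes "vanishes_to d \<psi> x N" "k < N" "i < d"
  shows "meval ((mpderiv i ^^ k) \<psi>) x = 0"
proof -
  have "(\<Sum>j<d. if j = i then k else 0) = k"
    using assms(3) by simp
  with assms show ?thesis
    unfolding vanishes_to_def
    by (metis Suc_eq_plus1 Suc_leI mderiv_multi_single_index)
qed

lemma zero_multiplicity_le:
  assumes "\<not> vanishes_to d \<psi> x (Suc k)"
  shows "zero_multiplicity d \<psi> x \<le> k"
proof -
  have bound: "N \<le> k" if "vanishes_to d \<psi> x N" for N
    using that assms unfolding vanishes_to_def by (meson not_less_eq_eq order_trans)
  have "vanishes_to d \<psi> x 0"
    by (simp add: vanishes_to_def)
  then have "vanishes_to d \<psi> x (GREATEST N. vanishes_to d \<psi> x N)"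
    using bound by (rule GreatestI_nat)
  then show ?thesis
    unfolding zero_multiplicity_def by (rule bound)
qed

theorem mainTheorem3:
  fixes d :: nat and \<psi> :: mpoly and x :: "nat \<Rightarrow> real"
  assumes "in_Rd d \<psi>"
    and "\<exists>q. in_Rd d q \<and> fischer d \<psi> q = 1"
    and "meval \<psi> x = 0"
  shows "zero_multiplicity d \<psi> x \<le> 2"
proof (rule zero_multiplicity_le)
  obtain q where q: "fischer d \<psi> q = 1"
    using assms(2) by blast
  show "\<not> vanishes_to d \<psi> x (Suc 2)"
  proof
    assume vanishes: "vanishes_to d \<psi> x (Suc 2)"
    have "meval (laplacian d (\<psi> * q)) x = 0"
    proof (rule meval_laplacian_mult_eq_0)
      show "meval (mpderiv i \<psi>) x = 0" if "i < d" for i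
        using vanishes_to_mpderiv_funpow[OF vanishes _ that, of 1] by simp
      show "meval (mpderiv i (mpderiv i \<psi>)) x = 0" if "i < d" for i
        using vanishes_to_mpderiv_funpow[OF vanishes _ that, of 2] by (simp add: numeral_2_eq_2)
    qed (rule assms(3))
    with q show False
      by (simp add: fischer_def meval_one)
  qed
qed

end
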